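(* Let $G$ be a directed acyclic graph, let $s,t\in V(G)$, and let $k=\operatorname{fes}(G)$. Then the number of distinct directed $s$-$t$ paths in $G$ is at most $2^k$.
   Context: $\operatorname{fes}(G)$ denotes the minimum size of a feedback edge set of the underlying undirected graph of $G$, i.e., the minimum number of edges whose removal makes the underlying undirected graph acyclic (a forest). *)

theory Defs
  imports Main
begin

definition is_dag :: "'a set \<Rightarrow> ('a \<times> 'a) set \<Rightarrow> bool" where
  "is_dag V E \<longleftrightarrow> finite V \<and> E \<subseteq> V \<times> V \<and> acyclic E"

definition uadj :: "('a \<times> 'a) set \<Rightarrow> 'a \<Rightarrow> 'a \<Rightarrow> bool" where
  "uadj E u v \<longleftrightarrow> (u, v) \<in> E \<or> (v, u) \<in> E"

definition ucycle :: "('a \<times> 'a) set \<Rightarrow> 'a list \<Rightarrow> bool" where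
  "ucycle E c \<longleftrightarrow> length c \<ge> 3 \<and> distinct c \<and>
     (\<forall>i < length c. uadj E (c ! i) (c ! ((i + 1) mod length c)))"

definition uforest :: "('a \<times> 'a) set \<Rightarrow> bool" where
  "uforest E \<longleftrightarrow> (\<nexists>c. ucycle E c)"

definition fes :: "('a \<times> 'a) set \<Rightarrow> nat" where
  "fes E = Min (card ` {F. F \<subseteq> E \<and> uforest (E - F)})"

definition dpath :: "('a \<times> 'a) set \<Rightarrow> 'a \<Rightarrow> 'a \<Rightarrow> 'a list \<Rightarrow> bool" where
  "dpath E s t p \<longleftrightarrow> p \<noteq> [] \<and> hd p = s \<and> last p = t \<and> distinct p \<and>
     (\<forall>i. i + 1 < length p \<longrightarrow> (p ! i, p ! (i + 1)) \<in> E)"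

end

(* Fix a minimum feedback edge set F, so that E - F is an undirected forest. Two distinct
   s-t paths cannot contain the same edges of F. After their common prefix they leave some
   vertex along different edges; let w be the first later vertex of the first path that lies
   on the second. The two arcs from the branching vertex to w form an undirected cycle, and
   none of its edges lies in F: such an edge would be shared by both paths, which fails for
   the two first edges, for edges leaving inner vertices of the first arc (these avoid the
   second path), and, by acyclicity, for edges leaving inner vertices of the second arc
   (these cannot occur after w on the first path). So a path is determined by its set of
   F-edges, and there are at most 2 ^ card F of them. *)

theory Submission
  imports Defs
begin

definition path_edges :: "'a list \<Rightarrow> ('a \<times> 'a) set" where
  "path_edges p = set (zip p (tl p))"

lemma path_edges_Nil [simp]: "path_edges [] = {}"
  and path_edges_singleton [simp]: "path_edges [x] = {}"
  and path_edges_Cons_Cons [simp]: "path_edges (x # y # p) = insert (x, y) (path_edges (y # p))"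
  by (simp_all add: path_edges_def)

lemma path_edges_append_subset: "path_edges xs \<subseteq> path_edges (xs @ ys)"
  by (induction xs rule: induct_list012) auto

lemma path_edges_subset_set: "path_edges p \<subseteq> set p \<times> set p"
  by (induction p rule: induct_list012) auto

lemma path_edge_fst_in_butlast: "(x, y) \<in> path_edges p \<Longrightarrow> x \<in> set (butlast p)"
  by (induction p rule: induct_list012) auto

lemma path_edge_from_hd: "distinct (x # p) \<Longrightarrow> (x, z) \<in> path_edges (x # p) \<Longrightarrow> z = hd p"
  by (cases p) (auto dest: subsetD[OF path_edges_subset_set])

lemma path_edges_subset_iff_successively:
  "path_edges p \<subseteq> E \<longleftrightarrow> successively (\<lambda>x y. (x, y) \<in> E) p"
  by (induction p rule: induct_list012) auto

lemma trancl_if_path_edges_append: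
  assumes "path_edges (xs @ ys) \<subseteq> E" "x \<in> set xs" "y \<in> set ys"
  shows "(x, y) \<in> E\<^sup>+"
proof -
  have "successively (\<lambda>x y. (x, y) \<in> E\<^sup>+) (xs @ ys)"
    using assms(1) unfolding path_edges_subset_iff_successively
    by (rule successively_mono) auto
  then have "sorted_wrt (\<lambda>x y. (x, y) \<in> E\<^sup>+) (xs @ ys)"
    by (simp add: successively_conv_sorted_wrt transp_trans)
  then show ?thesis
    using assms(2,3) by (simp add: sorted_wrt_append)
qed

lemma set_before_disjoint_set_after_if_acyclic:
  assumes "acyclic E" "path_edges (xs @ w # ys) \<subseteq> E" "path_edges (us @ w # vs) \<subseteq> E"
  shows "set us \<inter> set ys = {}"
proof -
  have False if "x \<in> set us" "x \<in> set ys" for x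
  proof -
    have "(w, x) \<in> E\<^sup>+"
      using trancl_if_path_edges_append[of "xs @ [w]" ys E] assms(2) that(2) by simp
    moreover have "(x, w) \<in> E\<^sup>+"
      using trancl_if_path_edges_append[of us "w # vs" E] assms(3) that(1) by simp
    ultimately show False
      using assms(1) by (meson acyclic_def trancl_trans)
  qed
  then show ?thesis
    by blast
qed

lemma path_edges_disjoint_if_branch:
  assumes "distinct (s # P @ [w])" "distinct (s # b # q)"
    and "hd (P @ [w]) \<noteq> b" "set P \<inter> set (b # q) = {}"
  shows "path_edges (s # P @ [w]) \<inter> path_edges (s # b # q) = {}"
proof -
  have False if xy: "(x, y) \<in> path_edges (s # P @ [w])" "(x, y) \<in> path_edges (s # b # q)"
    for x y
  proof -
    have "x = s \<or> x \<in> set P"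
      using path_edge_fst_in_butlast[OF xy(1)] by (simp add: butlast_append)
    then show False
    proof
      assume "x = s"
      then show False
        using xy path_edge_from_hd[OF assms(1)] path_edge_from_hd[OF assms(2)] assms(3) by simp
    next
      assume "x \<in> set P"
      moreover have "x \<in> set (s # b # q)"
        using xy(2) path_edges_subset_set by blast
      ultimately show False
        using assms(1,4) by auto
    qed
  qed
  then show ?thesis
    by auto
qed

lemma dpath_iff:
  "dpath E s t p \<longleftrightarrow> p \<noteq> [] \<and> hd p = s \<and> last p = t \<and> distinct p \<and> path_edges p \<subseteq> E"
  by (simp add: dpath_def path_edges_subset_iff_successively successively_conv_nth)

lemma dpath_refl_iff: "dpath E s s p \<longleftrightarrow> p = [s]"
proof
  assume "dpath E s s p"
  then show "p = [s]"
    by (cases p rule: rev_cases) (auto simp: dpath_iff hd_append dest: hd_in_set split: if_split_asm)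
next
  assume "p = [s]"
  then show "dpath E s s p"
    by (simp add: dpath_iff)
qed

lemma dpath_Cons_Cons_iff:
  "dpath E s t (x # y # p) \<longleftrightarrow> x = s \<and> (s, y) \<in> E \<and> s \<notin> set (y # p) \<and> dpath E y t (y # p)"
  by (auto simp: dpath_iff)

lemma uadj_commute: "uadj E x y \<longleftrightarrow> uadj E y x"
  by (auto simp: uadj_def)

lemma successively_uadj_rev: "successively (uadj E) (rev xs) \<longleftrightarrow> successively (uadj E) xs"
  by (simp add: uadj_commute)

lemma ucycleI:
  assumes "length c \<ge> 3" "distinct c" "successively (uadj E) c" "uadj E (last c) (hd c)"
  shows "ucycle E c"
  unfolding ucycle_def
proof (intro conjI allI impI)
  fix i
  assume i: "i < length c"
  show "uadj E (c ! i) (c ! ((i + 1) mod length c))"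
  proof (cases "Suc i < length c")
    case True
    then show ?thesis
      using successively_nth[OF assms(3) True] by simp
  next
    case False
    with i have "i = length c - 1" "c \<noteq> []"
      by auto
    then show ?thesis
      using assms(4) by (simp add: last_conv_nth hd_conv_nth)
  qed
qed (use assms in auto)

lemma ucycle_of_two_paths:
  assumes "path_edges (s # P @ [w]) \<subseteq> E" "path_edges (s # Q @ [w]) \<subseteq> E"
    and "distinct (s # P @ [w])" "distinct (s # Q @ [w])" "set P \<inter> set Q = {}"
    and "P \<noteq> [] \<or> Q \<noteq> []"
  shows "ucycle E (s # P @ w # rev Q)"
proof (rule ucycleI)
  have uadj: "successively (uadj E) xs" if "path_edges xs \<subseteq> E" for xs
    using that unfolding path_edges_subset_iff_successively
    by (rule successively_mono) (simp add: uadj_def)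
  have "successively (uadj E) ((s # P) @ [w])"
    using uadj[OF assms(1)] by simp
  then have "successively (uadj E) (s # P)" "uadj E (last (s # P)) w"
    unfolding successively_append_iff by auto
  moreover have "successively (uadj E) (Q @ [w])"
    using uadj[OF assms(2)] by (simp add: successively_Cons)
  then have "successively (uadj E) (rev (Q @ [w]))"
    by (simp only: successively_uadj_rev)
  ultimately show "successively (uadj E) (s # P @ w # rev Q)"
    using successively_append_iff[of "uadj E" "s # P" "w # rev Q"] by simp
  have "(s, hd (Q @ [w])) \<in> E"
    using assms(2) by (cases Q) auto
  then show "uadj E (last (s # P @ w # rev Q)) (hd (s # P @ w # rev Q))"
    by (cases Q) (auto simp: uadj_def last_rev)
qed (use assms in \<open>auto simp: Suc_le_eq\<close>)

lemma ex_ucycle_if_dpaths_branch: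
  assumes "acyclic E"
    and p: "dpath E s t (s # a # p)" and q: "dpath E s t (s # b # q)" and "a \<noteq> b"
    and same_F: "path_edges (s # a # p) \<inter> F = path_edges (s # b # q) \<inter> F"
  shows "\<exists>c. ucycle (E - F) c"
proof -
  have dp: "distinct (s # a # p)" and dq: "distinct (s # b # q)"
    and Ep: "path_edges (s # a # p) \<subseteq> E" and Eq: "path_edges (s # b # q) \<subseteq> E"
    using p q by (simp_all add: dpath_iff)
  have "t = last (a # p)" "t = last (b # q)"
    using p q by (simp_all add: dpath_iff)
  then have "t \<in> set (a # p)" "t \<in> set (b # q)"
    by (metis last_in_set list.discI)+
  then obtain P w p3 where p_split: "a # p = P @ w # p3" and "w \<in> set (b # q)"
    and P_off_q: "set P \<inter> set (b # q) = {}"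
    using split_list_first_prop[of "a # p" "\<lambda>x. x \<in> set (b # q)"] by blast
  then obtain Q q3 where q_split: "b # q = Q @ w # q3"
    by (meson split_list)
  define A where "A = s # P @ [w]"
  define B where "B = s # Q @ [w]"
  have A_sub: "path_edges A \<subseteq> path_edges (s # a # p)"
    and B_sub: "path_edges B \<subseteq> path_edges (s # b # q)"
    using path_edges_append_subset[of A p3] path_edges_append_subset[of B q3]
    unfolding A_def B_def p_split q_split by simp_all
  have dA: "distinct A" and dB: "distinct B"
    using dp dq unfolding A_def B_def p_split q_split by simp_all
  have "set (s # Q) \<inter> set p3 = {}"
    using set_before_disjoint_set_after_if_acyclic[OF \<open>acyclic E\<close>, of "s # P" w p3 "s # Q" q3]
      Ep Eq unfolding p_split q_split by simp
  then have Q_off_p: "set Q \<inter> set (a # p) = {}"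
    using P_off_q dq unfolding p_split q_split by auto
  have "hd (P @ [w]) \<noteq> b" "hd (Q @ [w]) \<noteq> a"
    using p_split q_split \<open>a \<noteq> b\<close> by (cases P; cases Q; simp)+
  then have "path_edges A \<inter> path_edges (s # b # q) = {}"
    and "path_edges B \<inter> path_edges (s # a # p) = {}"
    using path_edges_disjoint_if_branch[OF dA[unfolded A_def] dq _ P_off_q]
      path_edges_disjoint_if_branch[OF dB[unfolded B_def] dp _ Q_off_p]
    unfolding A_def B_def by blast+
  with A_sub B_sub Ep Eq same_F have "path_edges A \<subseteq> E - F" "path_edges B \<subseteq> E - F"
    by blast+
  moreover have "set P \<inter> set Q = {}"
    using P_off_q q_split by auto
  moreover have "P \<noteq> [] \<or> Q \<noteq> []"
    using p_split q_split \<open>a \<noteq> b\<close> by auto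
  ultimately have "ucycle (E - F) (s # P @ w # rev Q)"
    using dA dB unfolding A_def B_def by (intro ucycle_of_two_paths)
  then show ?thesis ..
qed

lemma dpath_eq_if_same_feedback_edges:
  assumes "acyclic E" "uforest (E - F)"
  shows "dpath E s t p \<Longrightarrow> dpath E s t q \<Longrightarrow> path_edges p \<inter> F = path_edges q \<inter> F \<Longrightarrow> p = q"
proof (induction p arbitrary: s q rule: induct_list012)
  case 1
  then show ?case by (simp add: dpath_iff)
next
  case (2 x)
  from "2.prems"(1) have "s = t" by (auto simp: dpath_iff)
  with "2.prems" show ?case by (simp add: dpath_refl_iff)
next
  case (3 x a p)
  from "3.prems"(1) have x: "x = s" and pa: "dpath E a t (a # p)" and "s \<notin> set (a # p)"
    by (simp_all add: dpath_Cons_Cons_iff)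
  show ?case
  proof (cases q rule: remdups_adj.cases)
    case 1
    with "3.prems"(2) show ?thesis by (simp add: dpath_iff)
  next
    case (2 y)
    with "3.prems"(2) have "s = t" by (auto simp: dpath_iff)
    with "3.prems"(1) show ?thesis by (simp add: dpath_refl_iff)
  next
    case (3 y b q')
    from "3.prems"(2) have y: "y = s" and qb: "dpath E b t (b # q')" and "s \<notin> set (b # q')"
      unfolding \<open>q = y # b # q'\<close> by (simp_all add: dpath_Cons_Cons_iff)
    show ?thesis
    proof (cases "a = b")
      case True
      have "(s, a) \<notin> path_edges (a # p)" "(s, b) \<notin> path_edges (b # q')"
        using \<open>s \<notin> set (a # p)\<close> \<open>s \<notin> set (b # q')\<close> path_edges_subset_set by blast+
      with "3.prems"(3) have "path_edges (a # p) \<inter> F = path_edges (b # q') \<inter> F"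
        unfolding x y \<open>q = y # b # q'\<close> True by auto
      with "3.IH"(2) pa qb True have "a # p = b # q'"
        by blast
      then show ?thesis
        using x y \<open>q = y # b # q'\<close> by simp
    next
      case False
      from "3.prems" have "\<exists>c. ucycle (E - F) c"
        unfolding x y \<open>q = y # b # q'\<close>
        by (rule ex_ucycle_if_dpaths_branch[OF assms(1) _ _ False])
      with assms(2) show ?thesis
        unfolding uforest_def by blast
    qed
  qed
qed

lemma card_dpaths_le_feedback_edge_set:
  assumes "acyclic E" "uforest (E - F)" "finite F"
  shows "card {p. dpath E s t p} \<le> 2 ^ card F"
proof -
  have "inj_on (\<lambda>p. path_edges p \<inter> F) {p. dpath E s t p}"
    using dpath_eq_if_same_feedback_edges[OF assms(1,2)] by (auto intro: inj_onI)
  then have "card {p. dpath E s t p} \<le> card (Pow F)"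
    by (rule card_inj_on_le) (use assms(3) in auto)
  then show ?thesis
    by (simp add: card_Pow assms(3))
qed

lemma uforest_empty: "uforest {}"
  unfolding uforest_def ucycle_def uadj_def by (auto intro: exI[of _ 0])

lemma obtain_min_feedback_edge_set:
  assumes "finite E"
  obtains F where "F \<subseteq> E" "uforest (E - F)" "card F = fes E"
proof -
  let ?S = "{F. F \<subseteq> E \<and> uforest (E - F)}"
  have "E \<in> ?S"
    by (simp add: uforest_empty)
  moreover have "finite ?S"
    using assms by simp
  ultimately have "fes E \<in> card ` ?S"
    unfolding fes_def by (intro Min_in) auto
  then show ?thesis
    using that by auto
qed

theorem lemma3:
  fixes V :: "'a set" and E :: "('a \<times> 'a) set" and s t :: 'a
  assumes "is_dag V E" and "s \<in> V" and "t \<in> V"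
  shows "card {p. dpath E s t p} \<le> 2 ^ fes E"
proof -
  have "finite E" "acyclic E"
    using assms(1) unfolding is_dag_def by (auto intro: finite_subset)
  obtain F where F: "F \<subseteq> E" "uforest (E - F)" "card F = fes E"
    using \<open>finite E\<close> by (rule obtain_min_feedback_edge_set)
  have "finite F"
    using F(1) \<open>finite E\<close> by (rule finite_subset)
  with \<open>acyclic E\<close> F(2) have "card {p. dpath E s t p} \<le> 2 ^ card F"
    by (rule card_dpaths_le_feedback_edge_set)
  with F(3) show ?thesis
    by simp
qed

end
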